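(* Consider data generated with two conditions $c\in\{0,1\}$ by the noiseless linear model $\mathbf{z}\sim r(\mathbf{z})$ independently of $c$, and $\mathbf{x}=A_c\mathbf{z}$, where $A_0,A_1$ are invertible matrices. Assume $r$ is non-Gaussian in the following sense: $\mathbf{z}=B\mathbf{s}$ for an invertible matrix $B$ and a random vector $\mathbf{s}$ whose components $s_i$ are mutually independent, non-Gaussian and of unit variance; and assume moreover that for every permutation matrix $P$ and every negation matrix $N$ (diagonal with entries in $\{1,-1\}$) such that $PN\neq I$, the distribution of $PN\mathbf{s}$ differs from that of $\mathbf{s}$. Then counterfactuals are identifiable from unpaired data: the counterfactual map $\mathbf{x}\mapsto A_1A_0^{-1}\mathbf{x}$, which gives $\mathbf{x}_{c=1}\mid(\mathbf{x},c=0)$, is uniquely determined by the conditional distributions of $\mathbf{x}$ given $c=0$ and given $c=1$, among all models of the same form (a latent $\mathbf{z}'=B'\mathbf{s}'$ independent of $c$ with $\mathbf{s}'$ having mutually independent non-Gaussian unit-variance components, and $\mathbf{x}=A'_c\mathbf{z}'$ with $A'_0,A'_1$ invertible) that reproduce these two conditional distributions.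
   Context: "Unpaired data" means independent samples $(\mathbf{x}_i,c_i)$ from the data-generating process, so each observation is seen under one condition only; hence only the conditional distributions of $\mathbf{x}$ given $c$ are available. In the structural model, the counterfactual of an observation $\mathbf{x}$ observed under $c=0$ had it been observed under $c=1$ is obtained by inferring $\mathbf{z}$ from $(\mathbf{x},c=0)$ and outputting $A_1\mathbf{z}$, i.e. $A_1A_0^{-1}\mathbf{x}$. *)

theory Defs
  imports "HOL-Probability.Probability"
begin

definition non_gaussian :: "'a measure \<Rightarrow> ('a \<Rightarrow> real) \<Rightarrow> bool" where
  "non_gaussian M X \<longleftrightarrow>
     \<not> (\<exists>mu sigma. sigma > 0 \<and> distr M borel X = density lborel (normal_density mu sigma))"

definition ica_source :: "'a measure \<Rightarrow> ('a \<Rightarrow> real ^ 'n) \<Rightarrow> bool" where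
  "ica_source M s \<longleftrightarrow>
     s \<in> borel_measurable M \<and>
     prob_space.indep_vars M (\<lambda>_. borel) (\<lambda>i \<omega>. s \<omega> $ i) (UNIV :: 'n set) \<and>
     (\<forall>i. non_gaussian M (\<lambda>\<omega>. s \<omega> $ i)) \<and>
     (\<forall>i. integrable M (\<lambda>\<omega>. (s \<omega> $ i)\<^sup>2) \<and> prob_space.variance M (\<lambda>\<omega>. s \<omega> $ i) = 1)"

text \<open>The matrix P N, with P the permutation matrix of p (P i j = 1 iff j = p i) and
  N = diag(eps).\<close>
definition perm_neg_matrix :: "('n \<Rightarrow> 'n) \<Rightarrow> ('n \<Rightarrow> real) \<Rightarrow> real ^ 'n ^ 'n" where
  "perm_neg_matrix p eps = (\<chi> i j. if j = p i then eps j else 0)"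

text \<open>Conditional distribution of x given c = k (conditioning on an event of positive
  probability).\<close>
definition cond_distr :: "'a measure \<Rightarrow> ('a \<Rightarrow> real ^ 'n) \<Rightarrow> ('a \<Rightarrow> nat) \<Rightarrow> nat \<Rightarrow> (real ^ 'n) measure" where
  "cond_distr M x c k = distr (uniform_measure M {\<omega> \<in> space M. c \<omega> = k}) borel x"

text \<open>Independence of z and the discrete c is stated via the product rule for events.\<close>
definition lin_model ::
  "'a measure \<Rightarrow> ('a \<Rightarrow> nat) \<Rightarrow> ('a \<Rightarrow> real ^ 'n) \<Rightarrow> real ^ 'n ^ 'n \<Rightarrow> (nat \<Rightarrow> real ^ 'n ^ 'n) \<Rightarrow> bool" where
  "lin_model M c s B A \<longleftrightarrow>
     prob_space M \<and>
     c \<in> measurable M (count_space UNIV) \<and>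
     (\<forall>\<omega>\<in>space M. c \<omega> \<in> {0, 1}) \<and>
     measure M {\<omega> \<in> space M. c \<omega> = 0} > 0 \<and>
     measure M {\<omega> \<in> space M. c \<omega> = 1} > 0 \<and>
     ica_source M s \<and>
     invertible B \<and> invertible (A 0) \<and> invertible (A 1) \<and>
     (\<forall>S \<in> sets borel. \<forall>k.
        measure M {\<omega> \<in> space M. B *v s \<omega> \<in> S \<and> c \<omega> = k} =
        measure M {\<omega> \<in> space M. B *v s \<omega> \<in> S} * measure M {\<omega> \<in> space M. c \<omega> = k})"

definition model_x :: "('a \<Rightarrow> nat) \<Rightarrow> ('a \<Rightarrow> real ^ 'n) \<Rightarrow> real ^ 'n ^ 'n \<Rightarrow> (nat \<Rightarrow> real ^ 'n ^ 'n) \<Rightarrow> 'a \<Rightarrow> real ^ 'n" where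
  "model_x c s B A \<omega> = A (c \<omega>) *v (B *v s \<omega>)"

end

theory Submission
  imports Defs
begin

(*
  Both conditional laws are laws of mixed sources A_k B s, so the alternative source satisfies
  s' =d U_k s with U_k = (A'_k B')^-1 A_k B for k = 0, 1, and therefore T s =d s for
  T = U_1^-1 U_0. Equal second moments make T orthogonal. Write phi_j for the characteristic
  function of s_j and R_j(h) = |phi_j(h) - exp(i mu_j h - h^2/2)| / h^2 for its distance to
  that of N(mu_j, 1). Since s_j has unit variance, R_j(h) -> 0 as h -> 0, and factorising the
  characteristic function of (T s)_i gives R_i(u) <= sum_j T_ij^2 R_j(T_ij u). Along a column
  of T without an entry +1 or -1 this inequality strictly shrinks the argument, which forces
  the corresponding R_j to vanish, i.e. s_j to be Gaussian. So T is a signed permutation, the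
  asymmetry hypothesis gives T = I, hence U_0 = U_1, which rearranges to
  A'_1 A'_0^-1 = A_1 A_0^-1.
*)

lemma unit_entry_forces_zeros:
  fixes x :: "'a \<Rightarrow> real"
  assumes "finite A" and sum_sq: "(\<Sum>k\<in>A. (x k)\<^sup>2) = 1"
    and c: "c \<in> A" "\<bar>x c\<bar> = 1" and k: "k \<in> A" "k \<noteq> c"
  shows "x k = 0"
proof -
  have "(x c)\<^sup>2 = 1"
    using c(2) by (metis power2_abs power_one)
  then have "(\<Sum>k\<in>A - {c}. (x k)\<^sup>2) = 0"
    using sum_sq sum.remove[OF \<open>finite A\<close> c(1), of "\<lambda>k. (x k)\<^sup>2"] by simp
  then show ?thesis
    using \<open>finite A\<close> k by (simp add: sum_nonneg_eq_0_iff)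
qed

lemma abs_le_1_if_sum_squares_eq_1:
  fixes x :: "'a \<Rightarrow> real"
  assumes "finite A" "(\<Sum>k\<in>A. (x k)\<^sup>2) = 1" "k \<in> A"
  shows "\<bar>x k\<bar> \<le> 1"
proof -
  have "(x k)\<^sup>2 \<le> (\<Sum>k\<in>A. (x k)\<^sup>2)"
    using assms by (intro member_le_sum) auto
  then show ?thesis
    using assms(2) by (simp add: abs_square_le_1)
qed

lemma perm_neg_matrix_if_unit_entry_in_each_column:
  fixes T :: "real^'n::finite^'n"
  assumes rows: "\<And>i. (\<Sum>j\<in>UNIV. (T$i$j)\<^sup>2) = 1"
    and cols: "\<And>j. (\<Sum>i\<in>UNIV. (T$i$j)\<^sup>2) = 1"
    and unit: "\<And>j. \<exists>i. \<bar>T$i$j\<bar> = 1"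
  shows "\<exists>p eps. p permutes UNIV \<and> (\<forall>j. eps j \<in> {1, -1}) \<and> T = perm_neg_matrix p eps"
proof -
  obtain q where q: "\<And>j. \<bar>T$(q j)$j\<bar> = 1"
    using unit by metis
  have "inj q"
  proof (rule injI)
    fix j j'
    assume "q j = q j'"
    show "j = j'"
    proof (rule ccontr)
      assume "j \<noteq> j'"
      then have "T$(q j)$j' = 0"
        using unit_entry_forces_zeros[OF finite rows[of "q j"] UNIV_I q[of j] UNIV_I] by simp
      then show False
        using q[of j'] \<open>q j = q j'\<close> by simp
    qed
  qed
  then have q_perm: "q permutes UNIV"
    by (rule inj_imp_permutes) simp_all
  define eps where "eps j = T$(q j)$j" for j
  have "eps j \<in> {1, -1}" for j
    using q[of j] unfolding eps_def by (cases "T$(q j)$j \<ge> 0") auto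
  moreover have "T = perm_neg_matrix (inv q) eps"
  proof -
    have "T$i$j = (if j = inv q i then eps j else 0)" for i j
    proof (cases "i = q j")
      case False
      then show ?thesis
        using unit_entry_forces_zeros[OF finite cols[of j] UNIV_I q[of j] UNIV_I]
          permutes_inverses(1)[OF q_perm] by auto
    qed (simp add: eps_def permutes_inverses(2)[OF q_perm])
    then show ?thesis
      by (simp add: perm_neg_matrix_def vec_eq_iff)
  qed
  ultimately show ?thesis
    using permutes_inv[OF q_perm] by blast
qed

lemma orthogonal_matrix_row_sum_squares:
  "orthogonal_matrix T \<Longrightarrow> (\<Sum>j\<in>UNIV. (T$i$j)\<^sup>2) = 1"
  and orthogonal_matrix_column_sum_squares:
  "orthogonal_matrix T \<Longrightarrow> (\<Sum>i\<in>UNIV. (T$i$j)\<^sup>2) = 1"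
  for T :: "real^'n::finite^'n"
  unfolding orthogonal_matrix_def
  by (auto simp: vec_eq_iff matrix_matrix_mult_def transpose_def mat_def power2_eq_square
      dest!: spec[of _ i] spec[of _ j])

lemma matrix_inv_right: "invertible X \<Longrightarrow> X ** matrix_inv X = mat 1"
  and matrix_inv_left: "invertible X \<Longrightarrow> matrix_inv X ** X = mat 1"
  for X :: "real^'n::finite^'n"
  unfolding invertible_def matrix_inv_def by (metis (mono_tags, lifting) someI)+

lemma invertible_matrix_inv:
  fixes X :: "real^'n::finite^'n"
  assumes "invertible X"
  shows "invertible (matrix_inv X)"
  unfolding invertible_def using matrix_inv_left[OF assms] matrix_inv_right[OF assms] by blast

lemma matrix_inv_cancel_right: "invertible X \<Longrightarrow> Y ** X ** matrix_inv X = Y"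
  and matrix_inv_cancel_right': "invertible X \<Longrightarrow> Y ** matrix_inv X ** X = Y"
  for X Y :: "real^'n::finite^'n"
  by (simp_all add: matrix_mul_assoc[symmetric] matrix_inv_right matrix_inv_left)

lemma matrix_inv_mult:
  fixes X Y :: "real^'n::finite^'n"
  assumes "invertible X" "invertible Y"
  shows "matrix_inv (X ** Y) = matrix_inv Y ** matrix_inv X"
proof -
  have XY: "invertible (X ** Y)"
    using assms by (rule invertible_mult)
  have right_inv: "X ** Y ** (matrix_inv Y ** matrix_inv X) = mat 1"
    using assms by (simp add: matrix_mul_assoc matrix_inv_cancel_right matrix_inv_right)
  have "matrix_inv (X ** Y) = matrix_inv (X ** Y) ** (X ** Y ** (matrix_inv Y ** matrix_inv X))"
    by (simp add: right_inv)
  also have "\<dots> = matrix_inv (X ** Y) ** (X ** Y) ** (matrix_inv Y ** matrix_inv X)"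
    by (rule matrix_mul_assoc)
  finally show ?thesis
    using XY by (simp add: matrix_inv_left)
qed

lemma eq_if_matrix_inv_mult_eq_mat_1:
  fixes X Y :: "real^'n::finite^'n"
  assumes "invertible X" "matrix_inv X ** Y = mat 1"
  shows "Y = X"
proof -
  have "X ** (matrix_inv X ** Y) = Y"
    using assms(1) by (simp add: matrix_mul_assoc matrix_inv_right)
  then show ?thesis
    using assms(2) by simp
qed

lemma counterfactual_map_eq_if_source_maps_eq:
  fixes A0 A1 B A0' A1' B' :: "real^'n::finite^'n"
  assumes inv: "invertible A0" "invertible A1" "invertible B"
    "invertible A0'" "invertible A1'" "invertible B'"
    and eq: "matrix_inv (A0' ** B') ** (A0 ** B) = matrix_inv (A1' ** B') ** (A1 ** B)"
  shows "A1' ** matrix_inv A0' = A1 ** matrix_inv A0"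
proof -
  have "A1' ** B' ** (matrix_inv (A0' ** B') ** (A0 ** B)) ** matrix_inv (A0 ** B)
      = A1' ** B' ** (matrix_inv (A1' ** B') ** (A1 ** B)) ** matrix_inv (A0 ** B)"
    by (simp only: eq)
  then show ?thesis
    using inv by (simp add: matrix_inv_mult matrix_mul_assoc matrix_inv_cancel_right
        matrix_inv_cancel_right' matrix_inv_right)
qed

lemma eq_0_if_le_rescaled:
  fixes D :: "real \<Rightarrow> real" and \<rho> r :: real
  assumes \<rho>: "0 \<le> \<rho>" "\<rho> < 1" and r: "0 \<le> r"
    and nonneg: "\<And>t. 0 \<le> t \<Longrightarrow> 0 \<le> D t"
    and le_rescaled: "\<And>t. 0 \<le> t \<Longrightarrow> D t \<le> D (\<rho> * t)"
    and D0: "D 0 = 0" and lim: "(D \<longlongrightarrow> 0) (at_right 0)"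
  shows "D r = 0"
proof (rule ccontr)
  assume "D r \<noteq> 0"
  with nonneg[OF r] have pos: "0 < D r" by simp
  have iterate: "D r \<le> D (\<rho> ^ N * r)" for N
  proof (induction N)
    case (Suc N)
    have "0 \<le> \<rho> ^ N * r" using \<rho> r by simp
    from le_rescaled[OF this] Suc.IH show ?case by (simp add: mult.assoc)
  qed simp
  have "\<forall>\<^sub>F t in at_right 0. D t < D r"
    using lim pos by (rule order_tendstoD(2))
  then obtain b where b: "0 < b" "\<And>t. 0 < t \<Longrightarrow> t < b \<Longrightarrow> D t < D r"
    unfolding eventually_at_right_field by blast
  have "(\<lambda>N. \<rho> ^ N) \<longlonglongrightarrow> 0"
    using \<rho> by (intro LIMSEQ_power_zero) simp
  then have "(\<lambda>N. \<rho> ^ N * r) \<longlonglongrightarrow> 0"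
    by (rule tendsto_mult_left_zero)
  then have "\<forall>\<^sub>F N in sequentially. \<rho> ^ N * r < b"
    using b(1) by (rule order_tendstoD(2))
  then obtain N where N: "\<rho> ^ N * r < b"
    unfolding eventually_sequentially by auto
  have "D (\<rho> ^ N * r) < D r"
  proof (cases "\<rho> ^ N * r = 0")
    case False
    moreover have "0 \<le> \<rho> ^ N * r" using \<rho> r by simp
    ultimately have "0 < \<rho> ^ N * r" by linarith
    then show ?thesis using b(2) N by blast
  qed (use D0 pos in \<open>simp only:\<close>)
  with iterate[of N] show False by simp
qed

definition sup_within :: "(real \<Rightarrow> real) \<Rightarrow> real \<Rightarrow> real" where
  "sup_within f r = (SUP u\<in>{-r..r}. f u)"

lemma le_sup_within:
  "bdd_above (f ` {-r..r}) \<Longrightarrow> \<bar>u\<bar> \<le> r \<Longrightarrow> f u \<le> sup_within f r"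
  unfolding sup_within_def by (rule cSUP_upper) auto

lemma sup_within_le:
  "0 \<le> r \<Longrightarrow> (\<And>u. \<bar>u\<bar> \<le> r \<Longrightarrow> f u \<le> c) \<Longrightarrow> sup_within f r \<le> c"
  unfolding sup_within_def by (rule cSUP_least) auto

lemma sup_within_mono:
  "bdd_above (f ` {-r..r}) \<Longrightarrow> 0 \<le> t \<Longrightarrow> t \<le> r \<Longrightarrow> sup_within f t \<le> sup_within f r"
  by (auto intro!: sup_within_le le_sup_within)

lemma sup_within_0: "sup_within f 0 = f 0"
  by (simp add: sup_within_def)

lemma sup_within_nonneg:
  "bdd_above (f ` {-r..r}) \<Longrightarrow> 0 \<le> r \<Longrightarrow> f 0 = 0 \<Longrightarrow> 0 \<le> sup_within f r"
  using le_sup_within[of f r 0] by simp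

lemma sup_within_tendsto_0:
  assumes lim: "(f \<longlongrightarrow> 0) (at 0)" and f0: "f 0 = 0" and bdd: "\<And>r. bdd_above (f ` {-r..r})"
  shows "(sup_within f \<longlongrightarrow> 0) (at_right 0)"
proof (rule order_tendstoI)
  fix a :: real
  assume "a < 0"
  then show "\<forall>\<^sub>F r in at_right 0. a < sup_within f r"
    unfolding eventually_at_right_field
    using sup_within_nonneg[OF bdd _ f0] by (intro exI[of _ 1]) (auto intro: less_le_trans)
next
  fix a :: real
  assume "0 < a"
  then obtain d where d: "0 < d" "\<And>u. u \<noteq> 0 \<Longrightarrow> \<bar>u\<bar> < d \<Longrightarrow> f u < a / 2"
    using order_tendstoD(2)[OF lim, of "a / 2"] unfolding eventually_at by auto
  have "sup_within f r \<le> a / 2" if "0 < r" "r < d" for r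
  proof (rule sup_within_le)
    fix u
    assume "\<bar>u\<bar> \<le> r"
    then show "f u \<le> a / 2"
      using that d \<open>0 < a\<close> f0 by (cases "u = 0") (auto intro: less_imp_le)
  qed (use that in simp)
  then show "\<forall>\<^sub>F r in at_right 0. sup_within f r < a"
    unfolding eventually_at_right_field using \<open>0 < a\<close> d(1) by force
qed

lemma sup_within_subaverage:
  fixes T :: "real^'n::finite^'n" and R :: "'n \<Rightarrow> real \<Rightarrow> real"
  assumes bdd: "\<And>j r. bdd_above (R j ` {-r..r})"
    and subaverage: "\<And>u. R i u \<le> (\<Sum>j\<in>UNIV. (T$i$j)\<^sup>2 * R j (T$i$j * u))"
    and "0 \<le> r"
  shows "sup_within (R i) r \<le> (\<Sum>j\<in>UNIV. (T$i$j)\<^sup>2 * sup_within (R j) (\<bar>T$i$j\<bar> * r))"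
proof (rule sup_within_le[OF \<open>0 \<le> r\<close>])
  fix u
  assume "\<bar>u\<bar> \<le> r"
  then have "\<bar>T$i$j * u\<bar> \<le> \<bar>T$i$j\<bar> * r" for j
    by (simp add: abs_mult mult_left_mono)
  then have "R j (T$i$j * u) \<le> sup_within (R j) (\<bar>T$i$j\<bar> * r)" for j
    by (rule le_sup_within[OF bdd])
  then have "(\<Sum>j\<in>UNIV. (T$i$j)\<^sup>2 * R j (T$i$j * u))
      \<le> (\<Sum>j\<in>UNIV. (T$i$j)\<^sup>2 * sup_within (R j) (\<bar>T$i$j\<bar> * r))"
    by (intro sum_mono mult_left_mono) auto
  then show "R i u \<le> (\<Sum>j\<in>UNIV. (T$i$j)\<^sup>2 * sup_within (R j) (\<bar>T$i$j\<bar> * r))"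
    using subaverage[of u] by linarith
qed

text \<open>Sum the subaverage inequality over the rows and regroup by columns: a column with
  entries bounded by \<open>\<rho>\<close> contributes at most its supremum at radius \<open>\<rho> * r\<close>, any other
  column at most its supremum at radius \<open>r\<close>, and the latter cancel.\<close>

lemma sum_sup_within_contraction:
  fixes T :: "real^'n::finite^'n" and R :: "'n \<Rightarrow> real \<Rightarrow> real"
  assumes cols: "\<And>j. (\<Sum>i\<in>UNIV. (T$i$j)\<^sup>2) = 1"
    and bdd: "\<And>j r. bdd_above (R j ` {-r..r})" and R0: "\<And>j. R j 0 = 0"
    and subaverage: "\<And>i u. R i u \<le> (\<Sum>j\<in>UNIV. (T$i$j)\<^sup>2 * R j (T$i$j * u))"
    and J: "\<And>i j. j \<in> J \<Longrightarrow> \<bar>T$i$j\<bar> \<le> \<rho>" and "0 \<le> r"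
  shows "(\<Sum>j\<in>J. sup_within (R j) r) \<le> (\<Sum>j\<in>J. sup_within (R j) (\<rho> * r))"
proof -
  define S where "S j = sup_within (R j)" for j
  have column_bound: "(\<Sum>i\<in>UNIV. (T$i$j)\<^sup>2 * S j (\<bar>T$i$j\<bar> * r)) \<le> S j (c * r)"
    if "\<And>i. \<bar>T$i$j\<bar> \<le> c" for j c
  proof -
    have "(\<Sum>i\<in>UNIV. (T$i$j)\<^sup>2 * S j (\<bar>T$i$j\<bar> * r)) \<le> (\<Sum>i\<in>UNIV. (T$i$j)\<^sup>2 * S j (c * r))"
      unfolding S_def using that \<open>0 \<le> r\<close>
      by (intro sum_mono mult_left_mono sup_within_mono[OF bdd] mult_right_mono) auto
    also have "\<dots> = S j (c * r)"
      using cols[of j] by (simp add: sum_distrib_right[symmetric])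
    finally show ?thesis .
  qed
  have "(\<Sum>j\<in>UNIV. S j r) \<le> (\<Sum>i\<in>UNIV. \<Sum>j\<in>UNIV. (T$i$j)\<^sup>2 * S j (\<bar>T$i$j\<bar> * r))"
    unfolding S_def using bdd subaverage \<open>0 \<le> r\<close> by (intro sum_mono sup_within_subaverage)
  also have "\<dots> = (\<Sum>j\<in>UNIV. \<Sum>i\<in>UNIV. (T$i$j)\<^sup>2 * S j (\<bar>T$i$j\<bar> * r))"
    by (rule sum.swap)
  also have "\<dots> \<le> (\<Sum>j\<in>UNIV. if j \<in> J then S j (\<rho> * r) else S j r)"
    using column_bound[of _ \<rho>] column_bound[of _ 1] J abs_le_1_if_sum_squares_eq_1[OF finite cols]
    by (intro sum_mono) simp
  finally have "(\<Sum>j\<in>UNIV. S j r) \<le> (\<Sum>j\<in>J. S j (\<rho> * r)) + (\<Sum>j\<in>UNIV - J. S j r)"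
    by (simp add: sum.If_cases Compl_eq_Diff_UNIV)
  moreover have "(\<Sum>j\<in>UNIV. S j r) = (\<Sum>j\<in>J. S j r) + (\<Sum>j\<in>UNIV - J. S j r)"
    by (simp add: sum.subset_diff[of J UNIV] Compl_eq_Diff_UNIV)
  ultimately show ?thesis
    unfolding S_def by linarith
qed

lemma entries_le_lt_1_on_columns_without_unit_entry:
  fixes T :: "real^'n::finite^'n"
  assumes cols: "\<And>j. (\<Sum>i\<in>UNIV. (T$i$j)\<^sup>2) = 1"
  obtains \<rho> where "0 \<le> \<rho>" "\<rho> < 1" "\<And>i j. (\<forall>i'. \<bar>T$i'$j\<bar> \<noteq> 1) \<Longrightarrow> \<bar>T$i$j\<bar> \<le> \<rho>"
proof
  let ?E = "insert 0 {\<bar>T$i$j\<bar> | i j. \<forall>i'. \<bar>T$i'$j\<bar> \<noteq> 1}"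
  have "?E \<subseteq> insert 0 ((\<lambda>(i, j). \<bar>T$i$j\<bar>) ` UNIV)"
    by auto
  then have fin: "finite ?E"
    by (rule finite_subset) simp
  have "\<bar>T$i$j\<bar> < 1" if "\<forall>i'. \<bar>T$i'$j\<bar> \<noteq> 1" for i j
  proof -
    have "\<bar>T$i$j\<bar> \<noteq> 1"
      using that by blast
    with abs_le_1_if_sum_squares_eq_1[OF finite cols[of j] UNIV_I, of i] show ?thesis
      by linarith
  qed
  then show "0 \<le> Max ?E" "Max ?E < 1"
    using fin by (auto simp: Max_less_iff)
  show "\<bar>T$i$j\<bar> \<le> Max ?E" if "\<forall>i'. \<bar>T$i'$j\<bar> \<noteq> 1" for i j
    using fin that by (auto intro: Max_ge)
qed

lemma vanishes_if_column_has_no_unit_entry: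
  fixes T :: "real^'n::finite^'n" and R :: "'n \<Rightarrow> real \<Rightarrow> real"
  assumes cols: "\<And>j. (\<Sum>i\<in>UNIV. (T$i$j)\<^sup>2) = 1"
    and nonneg: "\<And>j h. 0 \<le> R j h"
    and R0: "\<And>j. R j 0 = 0"
    and bdd: "\<And>j r. bdd_above (R j ` {-r..r})"
    and lim: "\<And>j. (R j \<longlongrightarrow> 0) (at 0)"
    and subaverage: "\<And>i u. R i u \<le> (\<Sum>j\<in>UNIV. (T$i$j)\<^sup>2 * R j (T$i$j * u))"
    and no_unit: "\<And>i. \<bar>T$i$k\<bar> \<noteq> 1"
  shows "R k u = 0"
proof -
  define J where "J = {j. \<forall>i. \<bar>T$i$j\<bar> \<noteq> 1}"
  obtain \<rho> where \<rho>: "0 \<le> \<rho>" "\<rho> < 1"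
    and \<rho>_bound: "\<And>i j. (\<forall>i'. \<bar>T$i'$j\<bar> \<noteq> 1) \<Longrightarrow> \<bar>T$i$j\<bar> \<le> \<rho>"
    using entries_le_lt_1_on_columns_without_unit_entry[OF cols] by blast
  have J: "\<bar>T$i$j\<bar> \<le> \<rho>" if "j \<in> J" for i j
    using \<rho>_bound that by (simp add: J_def)
  have S_nonneg: "0 \<le> sup_within (R j) r" if "0 \<le> r" for j r
    using bdd that R0 by (rule sup_within_nonneg)
  have "(\<Sum>j\<in>J. sup_within (R j) \<bar>u\<bar>) = 0"
  proof (rule eq_0_if_le_rescaled[OF \<rho>, where D = "\<lambda>t. \<Sum>j\<in>J. sup_within (R j) t"])
    show "0 \<le> (\<Sum>j\<in>J. sup_within (R j) t)" if "0 \<le> t" for t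
      using S_nonneg that by (simp add: sum_nonneg)
    show "(\<Sum>j\<in>J. sup_within (R j) t) \<le> (\<Sum>j\<in>J. sup_within (R j) (\<rho> * t))" if "0 \<le> t" for t
      using cols bdd R0 subaverage J that by (rule sum_sup_within_contraction)
    show "((\<lambda>t. \<Sum>j\<in>J. sup_within (R j) t) \<longlongrightarrow> 0) (at_right 0)"
      by (intro tendsto_null_sum sup_within_tendsto_0 lim R0 bdd)
  qed (simp_all add: sup_within_0 R0)
  moreover have "k \<in> J"
    using no_unit by (simp add: J_def)
  ultimately have "sup_within (R k) \<bar>u\<bar> = 0"
    using S_nonneg by (simp add: sum_nonneg_eq_0_iff)
  moreover have "R k u \<le> sup_within (R k) \<bar>u\<bar>"
    using bdd by (rule le_sup_within) simp
  ultimately show ?thesis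
    using nonneg[of k u] by simp
qed

definition gauss_char :: "real \<Rightarrow> real \<Rightarrow> complex" where
  "gauss_char m u = exp (\<i> * complex_of_real (m * u) + complex_of_real (-(u\<^sup>2) / 2))"

lemma norm_gauss_char_le_1: "norm (gauss_char m u) \<le> 1"
  by (simp add: gauss_char_def norm_exp_eq_Re)

lemma gauss_char_eq_iexp: "gauss_char m u = iexp (m * u) * complex_of_real (exp (-(u\<^sup>2) / 2))"
  by (simp only: gauss_char_def exp_add exp_of_real)

lemma char_normal_density_1: "char (density lborel (normal_density m 1)) u = gauss_char m u"
proof -
  let ?N0 = "density lborel std_normal_density"
  interpret N0: prob_space ?N0
    by (rule prob_space_normal_density) simp
  have "distributed ?N0 lborel (\<lambda>x. x) std_normal_density"
    unfolding distributed_def by (simp add: distr_id2)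
  then have "distributed ?N0 lborel (\<lambda>x. m + 1 * x) (normal_density (m + 1 * 0) (\<bar>1\<bar> * 1))"
    by (rule N0.normal_density_affine) simp_all
  then have shift: "distr ?N0 lborel (\<lambda>x. m + x) = density lborel (normal_density m 1)"
    by (simp add: distributed_distr_eq_density)
  have "char (density lborel (normal_density m 1)) u = (CLINT x|?N0. iexp (u * (m + x)))"
    unfolding shift[symmetric] char_def by (rule integral_distr) auto
  also have "\<dots> = (CLINT x|?N0. iexp (m * u) * iexp (u * x))"
    by (simp add: algebra_simps exp_add)
  also have "\<dots> = iexp (m * u) * char ?N0 u"
    unfolding char_def by (rule integral_mult_right_zero)
  also have "\<dots> = gauss_char m u"
    by (simp add: char_std_normal_distribution gauss_char_eq_iexp)
  finally show ?thesis .
qed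

lemma gauss_char_factor:
  fixes T :: "real^'n::finite^'n" and \<mu> :: "'n \<Rightarrow> real"
  assumes row: "(\<Sum>j\<in>UNIV. (T$i$j)\<^sup>2) = 1"
    and mean: "(\<Sum>j\<in>UNIV. T$i$j * \<mu> j) = \<mu> i"
  shows "gauss_char (\<mu> i) u = (\<Prod>j\<in>UNIV. gauss_char (\<mu> j) (T$i$j * u))"
proof -
  have "(\<Sum>j\<in>UNIV. \<mu> j * (T$i$j * u)) = (\<Sum>j\<in>UNIV. T$i$j * \<mu> j) * u"
    by (simp add: sum_distrib_right sum_distrib_left ac_simps)
  then have linear: "(\<Sum>j\<in>UNIV. \<mu> j * (T$i$j * u)) = \<mu> i * u"
    by (simp only: mean)
  have "(\<Sum>j\<in>UNIV. -((T$i$j * u)\<^sup>2) / 2) = (\<Sum>j\<in>UNIV. (T$i$j)\<^sup>2) * (-(u\<^sup>2) / 2)"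
    by (simp add: sum_distrib_right power_mult_distrib sum_negf sum_divide_distrib)
  then have quadratic: "(\<Sum>j\<in>UNIV. -((T$i$j * u)\<^sup>2) / 2) = -(u\<^sup>2) / 2"
    by (simp only: row mult_1)
  have "(\<Prod>j\<in>UNIV. gauss_char (\<mu> j) (T$i$j * u))
      = exp (\<i> * complex_of_real (\<Sum>j\<in>UNIV. \<mu> j * (T$i$j * u))
             + complex_of_real (\<Sum>j\<in>UNIV. -((T$i$j * u)\<^sup>2) / 2))"
    unfolding gauss_char_def exp_sum[OF finite, symmetric]
    by (simp only: sum.distrib of_real_sum sum_distrib_left)
  then show ?thesis
    by (simp only: linear quadratic gauss_char_def)
qed

lemma abs_exp_minus_le:
  assumes "0 \<le> (x::real)"
  shows "\<bar>exp (-x) - (1 - x)\<bar> \<le> x\<^sup>2"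
proof -
  have "exp (-x) = 1 / exp x"
    by (simp add: exp_minus field_simps)
  also have "\<dots> \<le> 1 / (1 + x)"
    using assms exp_ge_add_one_self[of x] by (intro divide_left_mono) auto
  also have "\<dots> \<le> 1 - x + x\<^sup>2"
  proof -
    have "1 \<le> (1 - x + x\<^sup>2) * (1 + x)"
      using assms by (simp add: algebra_simps power2_eq_square power3_eq_cube)
    then show ?thesis
      using assms by (simp add: divide_le_eq)
  qed
  finally show ?thesis
    using exp_ge_add_one_self[of "-x"] by simp
qed

lemma borel_measurable_matrix_vector_mult [measurable]:
  "(\<lambda>x::real^'n::finite. T *v x) \<in> borel_measurable borel"
  by (intro borel_measurable_continuous_onI linear_continuous_on matrix_vector_mul_bounded_linear)

lemma distr_matrix_vector_mult_cong:
  fixes X :: "'a \<Rightarrow> real^'n::finite" and Y :: "'b \<Rightarrow> real^'n"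
  assumes "X \<in> borel_measurable M" "Y \<in> borel_measurable N"
    and "distr M borel X = distr N borel Y"
  shows "distr M borel (\<lambda>\<omega>. C *v X \<omega>) = distr N borel (\<lambda>\<omega>. C *v Y \<omega>)"
  using distr_distr[of "(*v) C" borel borel X M] distr_distr[of "(*v) C" borel borel Y N] assms
  by (simp add: comp_def)

definition char_defect :: "real measure \<Rightarrow> real \<Rightarrow> real \<Rightarrow> real" where
  "char_defect \<mu> m h = cmod (char \<mu> h - gauss_char m h) / h\<^sup>2"

lemma char_defect_nonneg: "0 \<le> char_defect \<mu> m h"
  by (simp add: char_defect_def)

lemma char_defect_0: "char_defect \<mu> m 0 = 0"
  by (simp add: char_defect_def)

lemma norm_char_sub_gauss_char_eq:
  assumes "real_distribution \<mu>"
  shows "cmod (char \<mu> h - gauss_char m h) = h\<^sup>2 * char_defect \<mu> m h"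
  using real_distribution.char_zero[OF assms] by (cases "h = 0") (simp_all add: char_defect_def gauss_char_def)

context prob_space
begin

lemma ica_sourceD:
  fixes s :: "'a \<Rightarrow> real^'n::finite"
  assumes "ica_source M s"
  shows ica_source_measurable: "s \<in> borel_measurable M"
    and ica_source_component_measurable: "(\<lambda>\<omega>. s \<omega> $ j) \<in> borel_measurable M"
    and ica_source_square_integrable: "integrable M (\<lambda>\<omega>. (s \<omega> $ j)\<^sup>2)"
    and ica_source_integrable: "integrable M (\<lambda>\<omega>. s \<omega> $ j)"
    and ica_source_variance: "variance (\<lambda>\<omega>. s \<omega> $ j) = 1"
    and ica_source_indep: "indep_vars (\<lambda>_. borel) (\<lambda>i \<omega>. s \<omega> $ i) UNIV"
    and ica_source_non_gaussian: "non_gaussian M (\<lambda>\<omega>. s \<omega> $ j)"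
  using assms measurable_compose[OF _ borel_measurable_nth, of s]
    square_integrable_imp_integrable[of "\<lambda>\<omega>. s \<omega> $ j"]
  by (auto simp: ica_source_def)

lemma integrable_component_mult:
  fixes s :: "'a \<Rightarrow> real^'n::finite"
  assumes src: "ica_source M s"
  shows "integrable M (\<lambda>\<omega>. s \<omega> $ j * s \<omega> $ l)"
proof (rule Bochner_Integration.integrable_bound)
  show "integrable M (\<lambda>\<omega>. (s \<omega> $ j)\<^sup>2 + (s \<omega> $ l)\<^sup>2)"
    using ica_source_square_integrable[OF src] by auto
  show "(\<lambda>\<omega>. s \<omega> $ j * s \<omega> $ l) \<in> borel_measurable M"
    using ica_source_component_measurable[OF src] by measurable
  have "\<bar>a * b\<bar> \<le> a\<^sup>2 + b\<^sup>2" for a b :: real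
  proof -
    have "2 * \<bar>a\<bar> * \<bar>b\<bar> \<le> a\<^sup>2 + b\<^sup>2"
      using sum_squares_bound[of "\<bar>a\<bar>" "\<bar>b\<bar>"] by (simp add: power2_abs)
    moreover have "0 \<le> \<bar>a\<bar> * \<bar>b\<bar>"
      by simp
    ultimately show ?thesis
      unfolding abs_mult by linarith
  qed
  then show "AE \<omega> in M. norm (s \<omega> $ j * s \<omega> $ l) \<le> norm ((s \<omega> $ j)\<^sup>2 + (s \<omega> $ l)\<^sup>2)"
    by simp
qed

lemma expectation_component_mult:
  fixes s :: "'a \<Rightarrow> real^'n::finite"
  assumes src: "ica_source M s"
  shows "expectation (\<lambda>\<omega>. s \<omega> $ j * s \<omega> $ l) =
     expectation (\<lambda>\<omega>. s \<omega> $ j) * expectation (\<lambda>\<omega>. s \<omega> $ l) + (if j = l then 1 else 0)"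
proof (cases "j = l")
  case True
  then show ?thesis
    using variance_eq[OF ica_source_integrable[OF src] ica_source_square_integrable[OF src], of j]
      ica_source_variance[OF src, of j] by (simp add: power2_eq_square)
next
  case False
  have "indep_vars (\<lambda>_. borel) (\<lambda>i \<omega>. s \<omega> $ i) {j, l}"
    by (rule indep_vars_subset[OF ica_source_indep[OF src]]) auto
  then have "expectation (\<lambda>\<omega>. \<Prod>i\<in>{j, l}. s \<omega> $ i) = (\<Prod>i\<in>{j, l}. expectation (\<lambda>\<omega>. s \<omega> $ i))"
    by (intro indep_vars_lebesgue_integral) (auto intro: ica_source_integrable[OF src])
  then show ?thesis
    using False by simp
qed

lemma expectation_law_invariant:
  fixes s :: "'a \<Rightarrow> real^'n::finite" and f :: "real^'n \<Rightarrow> real"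
  assumes "s \<in> borel_measurable M" "f \<in> borel_measurable borel"
    and invariant: "distr M borel (\<lambda>\<omega>. T *v s \<omega>) = distr M borel s"
  shows "expectation (\<lambda>\<omega>. f (T *v s \<omega>)) = expectation (\<lambda>\<omega>. f (s \<omega>))"
  using integral_distr[of "\<lambda>\<omega>. T *v s \<omega>" M borel f] integral_distr[of s M borel f] assms
  by simp

lemma law_invariant_mean:
  fixes s :: "'a \<Rightarrow> real^'n::finite"
  assumes src: "ica_source M s"
    and invariant: "distr M borel (\<lambda>\<omega>. T *v s \<omega>) = distr M borel s"
  shows "(\<Sum>j\<in>UNIV. T$i$j * expectation (\<lambda>\<omega>. s \<omega> $ j)) = expectation (\<lambda>\<omega>. s \<omega> $ i)"
proof -
  have "(\<Sum>j\<in>UNIV. T$i$j * expectation (\<lambda>\<omega>. s \<omega> $ j)) = expectation (\<lambda>\<omega>. (T *v s \<omega>) $ i)"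
    by (simp add: matrix_vector_mult_def integrable_mult_right ica_source_integrable[OF src])
  also have "\<dots> = expectation (\<lambda>\<omega>. s \<omega> $ i)"
    by (rule expectation_law_invariant[OF ica_source_measurable[OF src] _ invariant]) simp
  finally show ?thesis .
qed

lemma law_invariant_orthonormal_rows:
  fixes s :: "'a \<Rightarrow> real^'n::finite"
  assumes src: "ica_source M s"
    and invariant: "distr M borel (\<lambda>\<omega>. T *v s \<omega>) = distr M borel s"
  shows "(\<Sum>j\<in>UNIV. T$i$j * T$k$j) = (if i = k then 1 else 0)"
proof -
  define \<mu> where "\<mu> j = expectation (\<lambda>\<omega>. s \<omega> $ j)" for j
  have mean: "(\<Sum>j\<in>UNIV. T$i$j * \<mu> j) = \<mu> i" for i
    unfolding \<mu>_def using src invariant by (rule law_invariant_mean)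
  have "\<mu> i * \<mu> k + (if i = k then 1 else 0) = expectation (\<lambda>\<omega>. s \<omega> $ i * s \<omega> $ k)"
    unfolding \<mu>_def by (rule expectation_component_mult[OF src, symmetric])
  also have "\<dots> = expectation (\<lambda>\<omega>. (T *v s \<omega>) $ i * (T *v s \<omega>) $ k)"
    by (rule expectation_law_invariant[OF ica_source_measurable[OF src] _ invariant, symmetric]) simp
  also have "\<dots> = expectation (\<lambda>\<omega>. \<Sum>j\<in>UNIV. \<Sum>l\<in>UNIV. (T$i$j * T$k$l) * (s \<omega> $ j * s \<omega> $ l))"
    by (simp add: matrix_vector_mult_def sum_product ac_simps)
  also have "\<dots> = (\<Sum>j\<in>UNIV. \<Sum>l\<in>UNIV. (T$i$j * T$k$l) * (\<mu> j * \<mu> l + (if j = l then 1 else 0)))"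
    by (simp add: integrable_component_mult[OF src] expectation_component_mult[OF src] \<mu>_def)
  also have "\<dots> = (\<Sum>j\<in>UNIV. \<Sum>l\<in>UNIV. (T$i$j * \<mu> j) * (T$k$l * \<mu> l))
      + (\<Sum>j\<in>UNIV. \<Sum>l\<in>UNIV. (T$i$j * T$k$l) * (if j = l then 1 else 0))"
    by (simp add: algebra_simps sum.distrib)
  also have "\<dots> = \<mu> i * \<mu> k + (\<Sum>j\<in>UNIV. T$i$j * T$k$j)"
    by (simp add: sum_product[symmetric] mean if_distrib sum.delta cong: if_cong)
  finally show ?thesis
    by simp
qed

lemma law_invariant_orthogonal:
  fixes s :: "'a \<Rightarrow> real^'n::finite"
  assumes "ica_source M s" "distr M borel (\<lambda>\<omega>. T *v s \<omega>) = distr M borel s"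
  shows "orthogonal_matrix T"
proof -
  have "T ** transpose T = mat 1"
    using law_invariant_orthonormal_rows[OF assms]
    by (simp add: vec_eq_iff matrix_matrix_mult_def transpose_def mat_def)
  then show ?thesis
    using orthogonal_matrix[of "transpose T"] by simp
qed

lemma char_distr_scale:
  assumes X: "X \<in> borel_measurable M"
  shows "char (distr M borel (\<lambda>\<omega>. c * X \<omega>)) u = char (distr M borel X) (c * u)"
proof -
  have "(\<lambda>\<omega>. c * X \<omega>) \<in> borel_measurable M"
    using X by measurable
  then have "char (distr M borel (\<lambda>\<omega>. c * X \<omega>)) u = (CLINT \<omega>|M. iexp (u * (c * X \<omega>)))"
    unfolding char_def by (rule integral_distr) measurable
  also have "\<dots> = (CLINT \<omega>|M. iexp ((c * u) * X \<omega>))"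
    by (simp add: ac_simps)
  also have "\<dots> = char (distr M borel X) (c * u)"
    unfolding char_def by (rule integral_distr[OF X, symmetric]) measurable
  finally show ?thesis .
qed

lemma char_component_factor:
  fixes s :: "'a \<Rightarrow> real^'n::finite"
  assumes src: "ica_source M s"
    and invariant: "distr M borel (\<lambda>\<omega>. T *v s \<omega>) = distr M borel s"
  shows "char (distr M borel (\<lambda>\<omega>. s \<omega> $ i)) u =
     (\<Prod>j\<in>UNIV. char (distr M borel (\<lambda>\<omega>. s \<omega> $ j)) (T$i$j * u))"
proof -
  note s = ica_source_measurable[OF src]
  have "distr M borel (\<lambda>\<omega>. (T *v s \<omega>) $ i) = distr (distr M borel (\<lambda>\<omega>. T *v s \<omega>)) borel (\<lambda>x. x $ i)"
    using s by (subst distr_distr) (auto simp: comp_def)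
  also have "\<dots> = distr M borel (\<lambda>\<omega>. s \<omega> $ i)"
    using s by (subst invariant, subst distr_distr) (auto simp: comp_def)
  finally have "char (distr M borel (\<lambda>\<omega>. s \<omega> $ i)) u
      = char (distr M borel (\<lambda>\<omega>. \<Sum>j\<in>UNIV. T$i$j * s \<omega> $ j)) u"
    by (simp add: matrix_vector_mult_def)
  also have "\<dots> = (\<Prod>j\<in>UNIV. char (distr M borel (\<lambda>\<omega>. T$i$j * s \<omega> $ j)) u)"
    by (intro char_distr_sum indep_vars_compose2[OF ica_source_indep[OF src]]) measurable
  also have "\<dots> = (\<Prod>j\<in>UNIV. char (distr M borel (\<lambda>\<omega>. s \<omega> $ j)) (T$i$j * u))"
    by (simp add: char_distr_scale[OF ica_source_component_measurable[OF src]])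
  finally show ?thesis .
qed

lemma expectation_min_cubic_tendsto_0:
  fixes Y :: "'a \<Rightarrow> real"
  assumes Y: "Y \<in> borel_measurable M" "integrable M (\<lambda>\<omega>. (Y \<omega>)\<^sup>2)"
  shows "((\<lambda>h. expectation (\<lambda>\<omega>. min (6 * (Y \<omega>)\<^sup>2) (\<bar>h\<bar> * \<bar>Y \<omega>\<bar> ^ 3))) \<longlongrightarrow> 0) (at 0)"
proof (subst tendsto_at_iff_sequentially, intro allI impI)
  fix X :: "nat \<Rightarrow> real"
  assume "X \<longlonglongrightarrow> 0"
  then have X0: "(\<lambda>n. \<bar>X n\<bar>) \<longlonglongrightarrow> 0"
    by (simp add: tendsto_rabs_zero_iff)
  have "(\<lambda>n. expectation (\<lambda>\<omega>. min (6 * (Y \<omega>)\<^sup>2) (\<bar>X n\<bar> * \<bar>Y \<omega>\<bar> ^ 3))) \<longlonglongrightarrow> expectation (\<lambda>\<omega>. 0)"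
  proof (rule integral_dominated_convergence[where w = "\<lambda>\<omega>. 6 * (Y \<omega>)\<^sup>2"])
    show "AE \<omega> in M. (\<lambda>n. min (6 * (Y \<omega>)\<^sup>2) (\<bar>X n\<bar> * \<bar>Y \<omega>\<bar> ^ 3)) \<longlonglongrightarrow> 0"
    proof (rule AE_I2)
      fix \<omega>
      have "(\<lambda>n. min (6 * (Y \<omega>)\<^sup>2) (\<bar>X n\<bar> * \<bar>Y \<omega>\<bar> ^ 3)) \<longlonglongrightarrow> min (6 * (Y \<omega>)\<^sup>2) (0 * \<bar>Y \<omega>\<bar> ^ 3)"
        by (intro tendsto_intros X0)
      then show "(\<lambda>n. min (6 * (Y \<omega>)\<^sup>2) (\<bar>X n\<bar> * \<bar>Y \<omega>\<bar> ^ 3)) \<longlonglongrightarrow> 0"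
        by simp
    qed
  qed (use Y in auto)
  then show "((\<lambda>h. expectation (\<lambda>\<omega>. min (6 * (Y \<omega>)\<^sup>2) (\<bar>h\<bar> * \<bar>Y \<omega>\<bar> ^ 3))) \<circ> X) \<longlonglongrightarrow> 0"
    by (simp add: comp_def)
qed

lemma norm_char_sub_gauss_char_le:
  assumes X: "X \<in> borel_measurable M" "integrable M (\<lambda>\<omega>. (X \<omega>)\<^sup>2)" "variance X = 1"
  defines "Y \<equiv> \<lambda>\<omega>. X \<omega> - expectation X"
  shows "cmod (char (distr M borel X) h - gauss_char (expectation X) h)
    \<le> h\<^sup>2 * (expectation (\<lambda>\<omega>. min (6 * (Y \<omega>)\<^sup>2) (\<bar>h\<bar> * \<bar>Y \<omega>\<bar> ^ 3)) / 6 + h\<^sup>2 / 4)"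
proof -
  let ?m = "expectation X"
  have iX: "integrable M X"
    by (rule square_integrable_imp_integrable[OF X(1,2)])
  have Y_meas: "Y \<in> borel_measurable M"
    unfolding Y_def using X(1) by measurable
  have "integrable M Y" "integrable M (\<lambda>\<omega>. (Y \<omega>)\<^sup>2)" "expectation Y = 0" "variance Y = 1"
    unfolding Y_def using iX X(2,3) by (auto simp: power2_diff prob_space)
  then have Taylor: "cmod (char (distr M borel Y) h - (1 - h\<^sup>2 * 1 / 2))
      \<le> (h\<^sup>2 / 6) * expectation (\<lambda>\<omega>. min (6 * (Y \<omega>)\<^sup>2) (\<bar>h\<bar> * \<bar>Y \<omega>\<bar> ^ 3))"
    by (intro char_approx3'[OF Y_meas]) simp_all
  have "char (distr M borel X) h = (CLINT \<omega>|M. iexp (h * X \<omega>))"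
    unfolding char_def by (rule integral_distr[OF X(1)]) measurable
  also have "\<dots> = (CLINT \<omega>|M. iexp (?m * h) * iexp (h * Y \<omega>))"
    unfolding Y_def by (simp add: algebra_simps exp_add[symmetric])
  also have "\<dots> = iexp (?m * h) * char (distr M borel Y) h"
    unfolding char_def integral_mult_right_zero by (subst integral_distr[OF Y_meas]) measurable
  finally have "cmod (char (distr M borel X) h - gauss_char ?m h)
      = cmod (char (distr M borel Y) h - complex_of_real (exp (-(h\<^sup>2) / 2)))"
    by (simp add: gauss_char_eq_iexp norm_mult flip: right_diff_distrib)
  also have "\<dots> \<le> cmod (char (distr M borel Y) h - (1 - h\<^sup>2 * 1 / 2))
      + cmod (complex_of_real (1 - h\<^sup>2 / 2) - complex_of_real (exp (-(h\<^sup>2) / 2)))"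
    by (rule order_trans[OF _ norm_triangle_ineq]) (simp add: algebra_simps)
  also have "cmod (complex_of_real (1 - h\<^sup>2 / 2) - complex_of_real (exp (-(h\<^sup>2) / 2)))
      = \<bar>exp (-(h\<^sup>2 / 2)) - (1 - h\<^sup>2 / 2)\<bar>"
    by (simp only: of_real_diff[symmetric] norm_of_real) simp
  also have "\<bar>exp (-(h\<^sup>2 / 2)) - (1 - h\<^sup>2 / 2)\<bar> \<le> (h\<^sup>2 / 2)\<^sup>2"
    by (rule abs_exp_minus_le) simp
  finally show ?thesis
    using Taylor by (simp add: algebra_simps power2_eq_square)
qed

lemma char_defect_tendsto_0:
  assumes X: "X \<in> borel_measurable M" "integrable M (\<lambda>\<omega>. (X \<omega>)\<^sup>2)" "variance X = 1"
  shows "(char_defect (distr M borel X) (expectation X) \<longlongrightarrow> 0) (at 0)"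
proof -
  define E where "E h = expectation (\<lambda>\<omega>. min (6 * (X \<omega> - expectation X)\<^sup>2) (\<bar>h\<bar> * \<bar>X \<omega> - expectation X\<bar> ^ 3))" for h
  have "integrable M (\<lambda>\<omega>. (X \<omega> - expectation X)\<^sup>2)"
    using X square_integrable_imp_integrable[OF X(1,2)] by (auto simp: power2_diff)
  then have "(E \<longlongrightarrow> 0) (at 0)"
    unfolding E_def using X(1) by (intro expectation_min_cubic_tendsto_0 borel_measurable_diff) auto
  then have bound_tendsto_0: "((\<lambda>h. E h / 6 + h\<^sup>2 / 4) \<longlongrightarrow> 0) (at 0)"
    by (auto intro!: tendsto_eq_intros)
  have "char_defect (distr M borel X) (expectation X) h \<le> E h / 6 + h\<^sup>2 / 4" if "h \<noteq> 0" for h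
    using norm_char_sub_gauss_char_le[OF X, of h] that
    by (simp add: char_defect_def E_def divide_le_eq mult.commute)
  then show ?thesis
    by (intro tendsto_sandwich[OF _ _ tendsto_const bound_tendsto_0])
      (auto simp: char_defect_nonneg eventually_at intro!: exI[of _ 1])
qed

lemma char_defect_le:
  assumes X: "X \<in> borel_measurable M" "integrable M (\<lambda>\<omega>. (X \<omega>)\<^sup>2)" "variance X = 1"
  shows "char_defect (distr M borel X) (expectation X) h \<le> 1 + h\<^sup>2 / 4"
proof (cases "h = 0")
  case False
  let ?Y = "\<lambda>\<omega>. X \<omega> - expectation X"
  have "integrable M (\<lambda>\<omega>. 6 * (?Y \<omega>)\<^sup>2)"
    using X square_integrable_imp_integrable[OF X(1,2)] by (auto simp: power2_diff)
  then have "expectation (\<lambda>\<omega>. min (6 * (?Y \<omega>)\<^sup>2) (\<bar>h\<bar> * \<bar>?Y \<omega>\<bar> ^ 3)) \<le> expectation (\<lambda>\<omega>. 6 * (?Y \<omega>)\<^sup>2)"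
    by (rule integral_mono') auto
  also have "\<dots> = 6"
    using X(3) by simp
  finally have "h\<^sup>2 * (expectation (\<lambda>\<omega>. min (6 * (?Y \<omega>)\<^sup>2) (\<bar>h\<bar> * \<bar>?Y \<omega>\<bar> ^ 3)) / 6 + h\<^sup>2 / 4)
      \<le> h\<^sup>2 * (1 + h\<^sup>2 / 4)"
    by (intro mult_left_mono) auto
  then have "cmod (char (distr M borel X) h - gauss_char (expectation X) h) \<le> h\<^sup>2 * (1 + h\<^sup>2 / 4)"
    using norm_char_sub_gauss_char_le[OF X, of h] by linarith
  then show ?thesis
    using False by (simp add: char_defect_def pos_divide_le_eq mult.commute)
qed (simp add: char_defect_0)

lemma bdd_above_char_defect:
  assumes X: "X \<in> borel_measurable M" "integrable M (\<lambda>\<omega>. (X \<omega>)\<^sup>2)" "variance X = 1"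
  shows "bdd_above (char_defect (distr M borel X) (expectation X) ` {-r..r})"
proof (rule bdd_aboveI2)
  fix u
  assume "u \<in> {-r..r}"
  then have "\<bar>u\<bar> \<le> r"
    by auto
  then have "u\<^sup>2 \<le> r\<^sup>2"
    using power_mono[of "\<bar>u\<bar>" r 2] by simp
  then show "char_defect (distr M borel X) (expectation X) u \<le> 1 + r\<^sup>2 / 4"
    using char_defect_le[OF X, of u] by linarith
qed

lemma distr_eq_normal_if_char_defect_vanishes:
  assumes X: "X \<in> borel_measurable M" and vanish: "\<And>h. char_defect (distr M borel X) m h = 0"
  shows "distr M borel X = density lborel (normal_density m 1)"
proof (rule Levy_uniqueness)
  show "real_distribution (distr M borel X)"
    using X by (rule real_distribution_distr)
  show "real_distribution (density lborel (normal_density m 1))"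
    by (auto simp: real_distribution_def real_distribution_axioms_def intro: prob_space_normal_density)
  have "char (distr M borel X) h = gauss_char m h" for h
  proof (cases "h = 0")
    case True
    then show ?thesis
      using real_distribution.char_zero[OF real_distribution_distr[OF X]] by (simp add: gauss_char_def)
  qed (use vanish[of h] in \<open>simp add: char_defect_def\<close>)
  then show "char (distr M borel X) = char (density lborel (normal_density m 1))"
    by (simp add: fun_eq_iff char_normal_density_1)
qed

lemma char_defect_subaverage:
  fixes s :: "'a \<Rightarrow> real^'n::finite"
  assumes src: "ica_source M s"
    and invariant: "distr M borel (\<lambda>\<omega>. T *v s \<omega>) = distr M borel s"
  defines "R j \<equiv> char_defect (distr M borel (\<lambda>\<omega>. s \<omega> $ j)) (expectation (\<lambda>\<omega>. s \<omega> $ j))"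
  shows "R i u \<le> (\<Sum>j\<in>UNIV. (T$i$j)\<^sup>2 * R j (T$i$j * u))"
proof (cases "u = 0")
  case True
  then show ?thesis
    by (simp add: R_def char_defect_0)
next
  case False
  define \<phi> where "\<phi> j = char (distr M borel (\<lambda>\<omega>. s \<omega> $ j))" for j
  define \<mu> where "\<mu> j = expectation (\<lambda>\<omega>. s \<omega> $ j)" for j
  have law: "real_distribution (distr M borel (\<lambda>\<omega>. s \<omega> $ j))" for j
    by (rule real_distribution_distr[OF ica_source_component_measurable[OF src]])
  have row: "(\<Sum>j\<in>UNIV. (T$i$j)\<^sup>2) = 1"
    using law_invariant_orthogonal[OF src invariant] by (rule orthogonal_matrix_row_sum_squares)
  have "u\<^sup>2 * R i u = cmod (\<phi> i u - gauss_char (\<mu> i) u)"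
    unfolding R_def \<phi>_def \<mu>_def by (rule norm_char_sub_gauss_char_eq[OF law, symmetric])
  also have "\<dots> = cmod ((\<Prod>j\<in>UNIV. \<phi> j (T$i$j * u)) - (\<Prod>j\<in>UNIV. gauss_char (\<mu> j) (T$i$j * u)))"
    unfolding \<phi>_def \<mu>_def
    by (subst char_component_factor[OF src invariant],
        subst gauss_char_factor[OF row law_invariant_mean[OF src invariant]]) (rule refl)
  also have "\<dots> \<le> (\<Sum>j\<in>UNIV. cmod (\<phi> j (T$i$j * u) - gauss_char (\<mu> j) (T$i$j * u)))"
    unfolding \<phi>_def
    by (intro norm_prod_diff real_distribution.cmod_char_le_1[OF law] norm_gauss_char_le_1)
  also have "\<dots> = u\<^sup>2 * (\<Sum>j\<in>UNIV. (T$i$j)\<^sup>2 * R j (T$i$j * u))"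
    unfolding R_def \<phi>_def \<mu>_def
    by (simp add: norm_char_sub_gauss_char_eq[OF law] sum_distrib_left power_mult_distrib ac_simps)
  finally show ?thesis
    using False by simp
qed

lemma perm_neg_matrix_if_law_invariant:
  fixes s :: "'a \<Rightarrow> real^'n::finite"
  assumes src: "ica_source M s"
    and invariant: "distr M borel (\<lambda>\<omega>. T *v s \<omega>) = distr M borel s"
  shows "\<exists>p eps. p permutes UNIV \<and> (\<forall>j. eps j \<in> {1, -1}) \<and> T = perm_neg_matrix p eps"
proof -
  define R where "R j = char_defect (distr M borel (\<lambda>\<omega>. s \<omega> $ j)) (expectation (\<lambda>\<omega>. s \<omega> $ j))" for j
  note component = ica_source_component_measurable[OF src] ica_source_square_integrable[OF src]
    ica_source_variance[OF src]
  have orth: "orthogonal_matrix T"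
    using src invariant by (rule law_invariant_orthogonal)
  have bdd: "bdd_above (R j ` {-r..r})" for j r
    unfolding R_def using component by (rule bdd_above_char_defect)
  have "\<exists>i. \<bar>T$i$j\<bar> = 1" for j
  proof (rule ccontr)
    assume "\<nexists>i. \<bar>T$i$j\<bar> = 1"
    then have "R j h = 0" for h
    proof (intro vanishes_if_column_has_no_unit_entry[where R = R and T = T and k = j] bdd)
      show "(\<Sum>i\<in>UNIV. (T$i$k)\<^sup>2) = 1" for k
        using orth by (rule orthogonal_matrix_column_sum_squares)
      show "(R k \<longlongrightarrow> 0) (at 0)" for k
        unfolding R_def using component by (rule char_defect_tendsto_0)
      show "R i u \<le> (\<Sum>k\<in>UNIV. (T$i$k)\<^sup>2 * R k (T$i$k * u))" for i u
        unfolding R_def using src invariant by (rule char_defect_subaverage)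
    qed (auto simp: R_def char_defect_nonneg char_defect_0)
    then have "distr M borel (\<lambda>\<omega>. s \<omega> $ j) = density lborel (normal_density (expectation (\<lambda>\<omega>. s \<omega> $ j)) 1)"
      unfolding R_def by (intro distr_eq_normal_if_char_defect_vanishes component)
    then show False
      using ica_source_non_gaussian[OF src, of j] unfolding non_gaussian_def by (auto intro: zero_less_one)
  qed
  then show ?thesis
    by (intro perm_neg_matrix_if_unit_entry_in_each_column orthogonal_matrix_row_sum_squares[OF orth]
        orthogonal_matrix_column_sum_squares[OF orth])
qed

end

lemma (in prob_space) distr_uniform_measure_eq_if_indep:
  fixes Y :: "'a \<Rightarrow> 'b::topological_space"
  assumes Y: "Y \<in> borel_measurable M"
    and E: "{\<omega> \<in> space M. P \<omega>} \<in> sets M" "0 < prob {\<omega> \<in> space M. P \<omega>}"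
    and indep: "\<And>S. S \<in> sets borel \<Longrightarrow>
      prob {\<omega> \<in> space M. Y \<omega> \<in> S \<and> P \<omega>} = prob {\<omega> \<in> space M. Y \<omega> \<in> S} * prob {\<omega> \<in> space M. P \<omega>}"
  shows "distr (uniform_measure M {\<omega> \<in> space M. P \<omega>}) borel Y = distr M borel Y"
proof (rule measure_eqI)
  fix S
  assume "S \<in> sets (distr (uniform_measure M {\<omega> \<in> space M. P \<omega>}) borel Y)"
  then have S: "S \<in> sets borel"
    by simp
  have preimage: "Y -` S \<inter> space M = {\<omega> \<in> space M. Y \<omega> \<in> S}"
    "{\<omega> \<in> space M. P \<omega>} \<inter> (Y -` S \<inter> space M) = {\<omega> \<in> space M. Y \<omega> \<in> S \<and> P \<omega>}"
    by auto
  have "emeasure (distr (uniform_measure M {\<omega> \<in> space M. P \<omega>}) borel Y) S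
      = emeasure M {\<omega> \<in> space M. Y \<omega> \<in> S \<and> P \<omega>} / emeasure M {\<omega> \<in> space M. P \<omega>}"
    using Y S E(1) by (simp add: emeasure_distr emeasure_uniform_measure measurable_sets flip: preimage)
  also have "\<dots> = ennreal (prob {\<omega> \<in> space M. Y \<omega> \<in> S})"
    using E(2) by (simp add: emeasure_eq_measure indep[OF S] divide_ennreal)
  also have "\<dots> = emeasure (distr M borel Y) S"
    using Y S by (simp add: emeasure_distr emeasure_eq_measure flip: preimage)
  finally show "emeasure (distr (uniform_measure M {\<omega> \<in> space M. P \<omega>}) borel Y) S = emeasure (distr M borel Y) S" .
qed simp

lemma cond_distr_model_x:
  fixes s :: "'a \<Rightarrow> real^'n::finite"
  assumes model: "lin_model M c s B A" and k: "k \<in> {0, 1}"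
  shows "cond_distr M (model_x c s B A) c k = distr M borel (\<lambda>\<omega>. (A k ** B) *v s \<omega>)"
proof -
  interpret prob_space M
    using model by (simp add: lin_model_def)
  let ?E = "{\<omega> \<in> space M. c \<omega> = k}"
  let ?z = "\<lambda>\<omega>. B *v s \<omega>"
  have c: "c \<in> measurable M (count_space UNIV)" and s: "s \<in> borel_measurable M"
    using model by (auto simp: lin_model_def ica_source_def)
  then have E: "?E \<in> sets M"
    by measurable
  have x: "model_x c s B A \<in> borel_measurable M"
    unfolding model_x_def
    by (rule measurable_compose_countable'[where f = "\<lambda>i \<omega>. A i *v (B *v s \<omega>)", OF _ c]) (use s in simp_all)
  have "cond_distr M (model_x c s B A) c k = distr (uniform_measure M ?E) borel (\<lambda>\<omega>. A k *v ?z \<omega>)"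
    unfolding cond_distr_def
    by (rule distr_cong_AE) (use E x s in \<open>auto intro!: AE_uniform_measureI simp: model_x_def\<close>)
  also have "\<dots> = distr M borel (\<lambda>\<omega>. A k *v ?z \<omega>)"
  proof (rule distr_matrix_vector_mult_cong)
    show "distr (uniform_measure M ?E) borel ?z = distr M borel ?z"
      using model k s E by (intro distr_uniform_measure_eq_if_indep) (auto simp: lin_model_def)
  qed (use s in simp_all)
  finally show ?thesis
    by (simp add: matrix_vector_mul_assoc)
qed

lemma distr_source_eq_if_mixed_eq:
  fixes s :: "'a \<Rightarrow> real^'n::finite" and s' :: "'b \<Rightarrow> real^'n" and P P' :: "real^'n^'n"
  assumes "s \<in> borel_measurable M" "s' \<in> borel_measurable M'" "invertible P'"
    and "distr M' borel (\<lambda>\<omega>. P' *v s' \<omega>) = distr M borel (\<lambda>\<omega>. P *v s \<omega>)"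
  shows "distr M' borel s' = distr M borel (\<lambda>\<omega>. (matrix_inv P' ** P) *v s \<omega>)"
  using distr_matrix_vector_mult_cong[of "\<lambda>\<omega>. P' *v s' \<omega>" M' "\<lambda>\<omega>. P *v s \<omega>" M "matrix_inv P'"] assms
  by (simp add: matrix_vector_mul_assoc matrix_inv_left)

lemma law_of_alternative_source:
  fixes s :: "'a \<Rightarrow> real^'n::finite" and s' :: "'b \<Rightarrow> real^'n"
  assumes model: "lin_model M c s B A" and model': "lin_model M' c' s' B' A'" and k: "k \<in> {0, 1}"
    and same: "cond_distr M' (model_x c' s' B' A') c' k = cond_distr M (model_x c s B A) c k"
  shows "distr M' borel s' = distr M borel (\<lambda>\<omega>. (matrix_inv (A' k ** B') ** (A k ** B)) *v s \<omega>)"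
proof (rule distr_source_eq_if_mixed_eq)
  show "s \<in> borel_measurable M" "s' \<in> borel_measurable M'"
    using model model' by (simp_all add: lin_model_def ica_source_def)
  show "invertible (A' k ** B')"
    using model' k by (auto simp: lin_model_def intro: invertible_mult)
  show "distr M' borel (\<lambda>\<omega>. (A' k ** B') *v s' \<omega>) = distr M borel (\<lambda>\<omega>. (A k ** B) *v s \<omega>)"
    using same cond_distr_model_x[OF model k] cond_distr_model_x[OF model' k] by simp
qed

theorem theorem2:
  fixes M :: "'a measure" and c :: "'a \<Rightarrow> nat" and s :: "'a \<Rightarrow> real ^ 'n::finite"
    and B :: "real ^ 'n ^ 'n" and A :: "nat \<Rightarrow> real ^ 'n ^ 'n"
    and M' :: "'b measure" and c' :: "'b \<Rightarrow> nat" and s' :: "'b \<Rightarrow> real ^ 'n"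
    and B' :: "real ^ 'n ^ 'n" and A' :: "nat \<Rightarrow> real ^ 'n ^ 'n"
  assumes model: "lin_model M c s B A"
    and asym: "\<And>p eps. p permutes (UNIV :: 'n set) \<Longrightarrow> (\<forall>j. eps j \<in> {1, -1}) \<Longrightarrow>
                 perm_neg_matrix p eps \<noteq> mat 1 \<Longrightarrow>
                 distr M borel (\<lambda>\<omega>. perm_neg_matrix p eps *v s \<omega>) \<noteq> distr M borel s"
    and model': "lin_model M' c' s' B' A'"
    and same0: "cond_distr M' (model_x c' s' B' A') c' 0 = cond_distr M (model_x c s B A) c 0"
    and same1: "cond_distr M' (model_x c' s' B' A') c' 1 = cond_distr M (model_x c s B A) c 1"
  shows "A' 1 ** matrix_inv (A' 0) = A 1 ** matrix_inv (A 0)"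
proof -
  interpret prob_space M
    using model by (simp add: lin_model_def)
  have src: "ica_source M s" and s: "s \<in> borel_measurable M"
    and inv: "invertible (A 0)" "invertible (A 1)" "invertible B"
    and inv': "invertible (A' 0)" "invertible (A' 1)" "invertible B'"
    using model model' by (auto simp: lin_model_def ica_source_def)
  define U where "U k = matrix_inv (A' k ** B') ** (A k ** B)" for k
  have law: "distr M' borel s' = distr M borel (\<lambda>\<omega>. U k *v s \<omega>)" if "k \<in> {0, 1}" for k
    using law_of_alternative_source[OF model model' that] same0 same1 that unfolding U_def by auto
  have U1: "invertible (U 1)"
    unfolding U_def using inv inv' by (intro invertible_mult invertible_matrix_inv)
  have invariant: "distr M borel (\<lambda>\<omega>. (matrix_inv (U 1) ** U 0) *v s \<omega>) = distr M borel s"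
    using distr_source_eq_if_mixed_eq[OF s s U1, of "U 0"] law[of 0] law[of 1] by simp
  then obtain p eps where pe: "p permutes UNIV" "\<forall>j. eps j \<in> {1, -1}"
    "matrix_inv (U 1) ** U 0 = perm_neg_matrix p eps"
    using perm_neg_matrix_if_law_invariant[OF src] by blast
  have "matrix_inv (U 1) ** U 0 = mat 1"
    using asym[OF pe(1,2)] invariant unfolding pe(3) by blast
  with U1 have "U 0 = U 1"
    by (rule eq_if_matrix_inv_mult_eq_mat_1)
  then show ?thesis
    unfolding U_def by (rule counterfactual_map_eq_if_source_maps_eq[OF inv inv'])
qed

end
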